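(* Let $k\ge 4$ be an integer and let $T\subset\mathbb R^3$ be a cube of side $h>0$ with faces parallel to the coordinate planes. Let $$V_T=\{v\in Q_k(T):\ \partial_{\mathbf n}v|_F\in Q_{k-1}(F)\ \text{for each of the six faces } F \text{ of } T\}.$$ Consider the following linear functionals on $V_T$: (1) at each of the 8 vertices: the values of $v,\partial_x v,\partial_y v,\partial_z v,\partial_{xy}v,\partial_{xz}v,\partial_{yz}v,\partial_{xyz}v$; (2) on each of the 12 edges: the value of $v$ at the $k-3$ interior points dividing the edge into $k-2$ equal parts; (3) on each of the 12 edges: the values of $\partial_{\mathbf n_1}v$, $\partial_{\mathbf n_2}v$, $\partial_{\mathbf n_1\mathbf n_2}v$ at the $k-4$ interior points dividing the edge into $k-3$ equal parts, where $\mathbf n_1,\mathbf n_2$ are the two coordinate directions orthogonal to the edge; (4) on each of the 6 faces: the value of $v$ at the $(k-3)^2$ interior points of the uniform grid of spacing $h/(k-2)$ on the face; (5) on each of the 6 faces: the value of $\partial_{\mathbf n}v$ ($\mathbf n$ the face normal direction) at the $(k-4)^2$ interior points of the uniform grid of spacing $h/(k-3)$ on the face; (6) the value of $v$ at the $(k-3)^3$ interior points of the uniform grid of spacing $h/(k-2)$ in $T$. Then this set of degrees of freedom uniquely determines a function of $V_T$: for any prescribed values of these functionals there exists exactly one $v\in V_T$ attaining them.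
   Context: $Q_k$ denotes the space of polynomials of degree at most $k$ in each variable separately, i.e. $Q_k=\mathrm{span}\{x^{i}y^{j}z^{l}:0\le i,j,l\le k\}$; on a face $F$ (a square in a coordinate plane) $Q_{k-1}(F)$ denotes the polynomials in the two in-face variables of degree at most $k-1$ in each. $\partial_{\mathbf n}$ on a face is the derivative in the coordinate direction normal to that face; the condition requires its restriction to $F$ to lie in $Q_{k-1}(F)$. *)

theory Defs
  imports "HOL-Analysis.Analysis"
begin

type_synonym fn3 = "real \<Rightarrow> real \<Rightarrow> real \<Rightarrow> real"

definition Qk :: "nat \<Rightarrow> fn3 set" where
  "Qk k = {f. \<exists>c :: nat \<Rightarrow> nat \<Rightarrow> nat \<Rightarrow> real. \<forall>x y z.
      f x y z = (\<Sum>i\<le>k. \<Sum>j\<le>k. \<Sum>l\<le>k. c i j l * x ^ i * y ^ j * z ^ l)}"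

definition Q2 :: "nat \<Rightarrow> (real \<Rightarrow> real \<Rightarrow> real) set" where
  "Q2 m = {p. \<exists>d :: nat \<Rightarrow> nat \<Rightarrow> real. \<forall>s t.
      p s t = (\<Sum>i\<le>m. \<Sum>j\<le>m. d i j * s ^ i * t ^ j)}"

definition dX :: "fn3 \<Rightarrow> fn3" where "dX f = (\<lambda>x y z. deriv (\<lambda>t. f t y z) x)"
definition dY :: "fn3 \<Rightarrow> fn3" where "dY f = (\<lambda>x y z. deriv (\<lambda>t. f x t z) y)"
definition dZ :: "fn3 \<Rightarrow> fn3" where "dZ f = (\<lambda>x y z. deriv (\<lambda>t. f x y t) z)"

definition VT :: "nat \<Rightarrow> real \<Rightarrow> real \<Rightarrow> real \<Rightarrow> real \<Rightarrow> fn3 set" where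
  "VT k a b c h = {v \<in> Qk k.
     (\<forall>x0\<in>{a, a+h}. \<exists>p\<in>Q2 (k-1). \<forall>y\<in>{b..b+h}. \<forall>z\<in>{c..c+h}. dX v x0 y z = p y z) \<and>
     (\<forall>y0\<in>{b, b+h}. \<exists>p\<in>Q2 (k-1). \<forall>x\<in>{a..a+h}. \<forall>z\<in>{c..c+h}. dY v x y0 z = p x z) \<and>
     (\<forall>z0\<in>{c, c+h}. \<exists>p\<in>Q2 (k-1). \<forall>x\<in>{a..a+h}. \<forall>y\<in>{b..b+h}. dZ v x y z0 = p x y)}"

definition off :: "real \<Rightarrow> nat \<Rightarrow> real list" where
  "off h m = map (\<lambda>j. real j * h / real m) [1..<m]"

definition dofs :: "nat \<Rightarrow> real \<Rightarrow> real \<Rightarrow> real \<Rightarrow> real \<Rightarrow> (fn3 \<Rightarrow> real) list" where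
  "dofs k a b c h =
     \<comment> \<open>(1) vertices\<close>
     concat [[(\<lambda>v. v x y z), (\<lambda>v. dX v x y z), (\<lambda>v. dY v x y z), (\<lambda>v. dZ v x y z),
              (\<lambda>v. dX (dY v) x y z), (\<lambda>v. dX (dZ v) x y z), (\<lambda>v. dY (dZ v) x y z),
              (\<lambda>v. dX (dY (dZ v)) x y z)].
             x \<leftarrow> [a, a+h], y \<leftarrow> [b, b+h], z \<leftarrow> [c, c+h]]
   \<comment> \<open>(2) edge values\<close>
   @ [(\<lambda>v. v (a+t) y z). y \<leftarrow> [b, b+h], z \<leftarrow> [c, c+h], t \<leftarrow> off h (k-2)]
   @ [(\<lambda>v. v x (b+t) z). x \<leftarrow> [a, a+h], z \<leftarrow> [c, c+h], t \<leftarrow> off h (k-2)]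
   @ [(\<lambda>v. v x y (c+t)). x \<leftarrow> [a, a+h], y \<leftarrow> [b, b+h], t \<leftarrow> off h (k-2)]
   \<comment> \<open>(3) edge normal derivatives\<close>
   @ concat [[(\<lambda>v. dY v (a+t) y z), (\<lambda>v. dZ v (a+t) y z), (\<lambda>v. dY (dZ v) (a+t) y z)].
             y \<leftarrow> [b, b+h], z \<leftarrow> [c, c+h], t \<leftarrow> off h (k-3)]
   @ concat [[(\<lambda>v. dX v x (b+t) z), (\<lambda>v. dZ v x (b+t) z), (\<lambda>v. dX (dZ v) x (b+t) z)].
             x \<leftarrow> [a, a+h], z \<leftarrow> [c, c+h], t \<leftarrow> off h (k-3)]
   @ concat [[(\<lambda>v. dX v x y (c+t)), (\<lambda>v. dY v x y (c+t)), (\<lambda>v. dX (dY v) x y (c+t))].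
             x \<leftarrow> [a, a+h], y \<leftarrow> [b, b+h], t \<leftarrow> off h (k-3)]
   \<comment> \<open>(4) face values\<close>
   @ [(\<lambda>v. v x (b+s) (c+t)). x \<leftarrow> [a, a+h], s \<leftarrow> off h (k-2), t \<leftarrow> off h (k-2)]
   @ [(\<lambda>v. v (a+s) y (c+t)). y \<leftarrow> [b, b+h], s \<leftarrow> off h (k-2), t \<leftarrow> off h (k-2)]
   @ [(\<lambda>v. v (a+s) (b+t) z). z \<leftarrow> [c, c+h], s \<leftarrow> off h (k-2), t \<leftarrow> off h (k-2)]
   \<comment> \<open>(5) face normal derivatives\<close>
   @ [(\<lambda>v. dX v x (b+s) (c+t)). x \<leftarrow> [a, a+h], s \<leftarrow> off h (k-3), t \<leftarrow> off h (k-3)]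
   @ [(\<lambda>v. dY v (a+s) y (c+t)). y \<leftarrow> [b, b+h], s \<leftarrow> off h (k-3), t \<leftarrow> off h (k-3)]
   @ [(\<lambda>v. dZ v (a+s) (b+t) z). z \<leftarrow> [c, c+h], s \<leftarrow> off h (k-3), t \<leftarrow> off h (k-3)]
   \<comment> \<open>(6) interior values\<close>
   @ [(\<lambda>v. v (a+r) (b+s) (c+t)). r \<leftarrow> off h (k-2), s \<leftarrow> off h (k-2), t \<leftarrow> off h (k-2)]"

end

theory Submission
  imports Defs "HOL-Computational_Algebra.Polynomial" "Jordan_Normal_Form.Determinant"
begin

text \<open>Uniqueness: if all degrees of freedom of \<open>v \<in> V\<^sub>T\<close> vanish, then along every edge \<open>v\<close> and its
  normal derivatives are polynomials in one variable of degree \<open>k\<close>, resp. \<open>k - 1\<close> (this is where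
  the face condition enters), with double zeros at both vertices and zeros at the interior grid
  points; hence they vanish. The same one-dimensional argument along the grid lines of each face,
  and then of the cube, gives \<open>v = 0\<close>.
  Existence: products of a one-dimensional basis adapted to the end slopes, with the index triples
  chosen so that every normal derivative on a face lies in \<open>Q\<^sub>k\<^sub>-\<^sub>1\<close>, give as many
  linearly independent elements of \<open>V\<^sub>T\<close> as there are degrees of freedom. By uniqueness the square
  matrix of the degrees of freedom on these elements is injective, hence invertible.\<close>

section \<open>Polynomial functions of one variable\<close>

definition poly_fun :: "nat \<Rightarrow> (real \<Rightarrow> real) \<Rightarrow> bool" where
  "poly_fun n f \<longleftrightarrow> (\<exists>p. degree p \<le> n \<and> f = poly p)"

lemma poly_eq_power_sum:
  fixes p :: "real poly"
  assumes "degree p \<le> n"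
  shows "poly p x = (\<Sum>i\<le>n. coeff p i * x ^ i)"
  unfolding poly_altdef using assms
  by (intro sum.mono_neutral_left) (auto simp: coeff_eq_0)

lemma poly_fun_power_sumI:
  assumes "\<And>x. f x = (\<Sum>i\<le>n. c i * x ^ i)"
  shows "poly_fun n f"
proof -
  have "degree (\<Sum>i\<le>n. monom (c i) i) \<le> n"
    by (intro degree_sum_le) (auto intro: order.trans[OF degree_monom_le])
  moreover have "f = poly (\<Sum>i\<le>n. monom (c i) i)"
    by (simp add: assms poly_sum poly_monom fun_eq_iff)
  ultimately show ?thesis
    unfolding poly_fun_def by blast
qed

lemma deriv_poly: "deriv (poly p) x = poly (pderiv p) x"
  by (rule DERIV_imp_deriv) (rule poly_DERIV)

lemma poly_fun_has_deriv: "poly_fun n f \<Longrightarrow> (f has_real_derivative deriv f x) (at x)"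
  unfolding poly_fun_def by (auto simp: deriv_poly)

lemma deriv_sum_poly_fun:
  assumes "finite S" "\<And>n. n \<in> S \<Longrightarrow> poly_fun m (f n)"
  shows "deriv (\<lambda>t. \<Sum>n\<in>S. w n * f n t) x = (\<Sum>n\<in>S. w n * deriv (f n) x)"
  using assms by (intro DERIV_imp_deriv DERIV_sum DERIV_cmult poly_fun_has_deriv) auto

lemma poly_fun_eqI:
  assumes "poly_fun m f" "poly_fun n g" "infinite S" "\<And>x. x \<in> S \<Longrightarrow> f x = g x"
  shows "f = g"
proof -
  obtain p q where f: "f = poly p" and g: "g = poly q"
    using assms(1,2) unfolding poly_fun_def by blast
  have "S \<subseteq> {x. poly (p - q) x = 0}"
    using assms(4) by (auto simp: f g)
  then have "p - q = 0"
    using assms(3) poly_roots_finite finite_subset by blast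
  then show ?thesis
    by (simp add: f g)
qed

lemma set_off: "set (off h m) = (\<lambda>j. real j * h / real m) ` {1..<m}"
  by (simp add: off_def)

lemma off_bounds: "0 < h \<Longrightarrow> t \<in> set (off h m) \<Longrightarrow> 0 < t \<and> t < h"
  by (auto simp: set_off field_simps)

lemma card_shifted_off: "0 < h \<Longrightarrow> card ((+) a ` set (off h m)) = m - 1"
  unfolding set_off image_image
  by (subst card_image) (auto simp: inj_on_def field_simps)

lemma double_root_dvd:
  fixes p :: "real poly"
  assumes "poly p x = 0" "poly (pderiv p) x = 0"
  shows "[:-x, 1:] ^ 2 dvd p"
proof -
  obtain q where q: "p = [:-x, 1:] * q"
    using assms(1) by (metis dvdE poly_eq_0_iff_dvd)
  have "poly q x = 0"
    using assms(2) unfolding q pderiv_mult by (simp add: pderiv_pCons)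
  then obtain r where "q = [:-x, 1:] * r"
    by (metis dvdE poly_eq_0_iff_dvd)
  then have "p = [:-x, 1:] ^ 2 * r"
    unfolding q power2_eq_square by (simp only: mult.assoc)
  then show ?thesis ..
qed

text \<open>Double zeros at both ends and \<open>n - 3\<close> interior zeros are \<open>n + 1\<close> zeros counted with
  multiplicity, one more than the degree allows.\<close>
lemma hermite_grid_vanishes:
  assumes h: "0 < h" and f: "poly_fun n f"
    and ends: "f a = 0" "deriv f a = 0" "f (a + h) = 0" "deriv f (a + h) = 0"
    and grid: "\<And>t. t \<in> set (off h (n - 2)) \<Longrightarrow> f (a + t) = 0"
  shows "f x = 0"
proof -
  define m where "m = n - 2"
  obtain p where deg: "degree p \<le> m + 2" and fp: "f = poly p"
    using f unfolding poly_fun_def m_def by force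
  have "p = 0"
  proof (rule ccontr)
    assume "p \<noteq> 0"
    obtain q1 where q1: "p = [:-a, 1:] ^ 2 * q1"
      using double_root_dvd[of p a] ends(1,2) by (auto simp: fp deriv_poly)
    have "poly q1 (a + h) = 0"
      using ends(3) h by (simp add: fp q1)
    moreover have "poly (pderiv q1) (a + h) = 0"
      using ends(4) h \<open>poly q1 (a + h) = 0\<close>
      by (simp add: fp q1 deriv_poly pderiv_mult pderiv_power_Suc)
    ultimately obtain q where q: "q1 = [:-(a + h), 1:] ^ 2 * q"
      using double_root_dvd by blast
    have pq: "p = [:-a, 1:] ^ 2 * [:-(a + h), 1:] ^ 2 * q"
      by (simp add: q1 q mult.assoc)
    with \<open>p \<noteq> 0\<close> have "q \<noteq> 0"
      by auto
    have "degree p = 4 + degree q"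
      unfolding pq using \<open>q \<noteq> 0\<close> by (simp add: degree_mult_eq degree_linear_power)
    then have "degree q + 2 \<le> m"
      using deg by simp
    have "(+) a ` set (off h m) \<subseteq> {x. poly q x = 0}"
    proof
      fix x assume "x \<in> (+) a ` set (off h m)"
      then obtain t where t: "t \<in> set (off h m)" "x = a + t"
        by auto
      have "poly p x = (t ^ 2 * (t - h) ^ 2) * poly q x"
        by (simp add: pq t(2))
      then show "x \<in> {x. poly q x = 0}"
        using grid[OF t(1)[unfolded m_def]] off_bounds[OF h t(1)] by (simp add: fp t(2))
    qed
    then have "m - 1 \<le> card {x. poly q x = 0}"
      using card_mono[OF poly_roots_finite[OF \<open>q \<noteq> 0\<close>]] card_shifted_off[OF h] by metis
    also have "\<dots> \<le> degree q"
      by (rule card_poly_roots_bound[OF \<open>q \<noteq> 0\<close>])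
    finally show False
      using \<open>degree q + 2 \<le> m\<close> by simp
  qed
  then show ?thesis
    by (simp add: fp)
qed

section \<open>The spaces \<open>Q\<^sub>k\<close> in two and three variables\<close>

lemma Q2I:
  assumes "\<And>s t. p s t = (\<Sum>i\<le>n. \<Sum>j\<le>n. d i j * s ^ i * t ^ j)"
  shows "p \<in> Q2 n"
  unfolding Q2_def using assms by blast

lemma Q2_line_fst:
  assumes "p \<in> Q2 n"
  shows "poly_fun n (\<lambda>s. p s t)"
proof -
  obtain d where d: "\<And>s t. p s t = (\<Sum>i\<le>n. \<Sum>j\<le>n. d i j * s ^ i * t ^ j)"
    using assms unfolding Q2_def by blast
  show ?thesis
    by (rule poly_fun_power_sumI[where c = "\<lambda>i. \<Sum>j\<le>n. d i j * t ^ j"])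
      (simp add: d sum_distrib_left sum_distrib_right mult_ac)
qed

lemma Q2_swap:
  assumes "p \<in> Q2 n"
  shows "(\<lambda>s t. p t s) \<in> Q2 n"
proof -
  obtain d where d: "\<And>s t. p s t = (\<Sum>i\<le>n. \<Sum>j\<le>n. d i j * s ^ i * t ^ j)"
    using assms unfolding Q2_def by blast
  have "p t s = (\<Sum>i\<le>n. \<Sum>j\<le>n. d j i * s ^ i * t ^ j)" for s t
    unfolding d by (subst sum.swap) (simp add: mult_ac)
  then show ?thesis
    by (rule Q2I)
qed

lemma Q2_line_snd:
  assumes "p \<in> Q2 n"
  shows "poly_fun n (p s)"
  using Q2_line_fst[OF Q2_swap[OF assms], of s] by simp

lemma Q2_deriv_line_snd:
  assumes "p \<in> Q2 n"
  shows "poly_fun n (\<lambda>s. deriv (p s) t)"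
proof -
  obtain d where d: "\<And>s t. p s t = (\<Sum>i\<le>n. \<Sum>j\<le>n. d i j * s ^ i * t ^ j)"
    using assms unfolding Q2_def by blast
  define q where "q i = (\<lambda>t. \<Sum>j\<le>n. d i j * t ^ j)" for i
  have "p s = (\<lambda>t. \<Sum>i\<le>n. s ^ i * q i t)" for s
    by (simp add: d q_def sum_distrib_left mult_ac fun_eq_iff)
  moreover have "poly_fun n (q i)" for i
    unfolding q_def by (rule poly_fun_power_sumI) simp
  ultimately have "deriv (p s) t = (\<Sum>i\<le>n. s ^ i * deriv (q i) t)" for s
    by (simp add: deriv_sum_poly_fun[where m = n])
  then show ?thesis
    by (intro poly_fun_power_sumI[where c = "\<lambda>i. deriv (q i) t"]) (simp add: mult.commute)
qed

lemma Q2_deriv_line_fst: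
  assumes "p \<in> Q2 n"
  shows "poly_fun n (\<lambda>t. deriv (\<lambda>s. p s t) s)"
  using Q2_deriv_line_snd[OF Q2_swap[OF assms], of s] by simp

lemma Q2_eq_on_square:
  assumes "p \<in> Q2 m" "q \<in> Q2 n" "0 < h"
    and eq: "\<And>s t. s \<in> {a..a + h} \<Longrightarrow> t \<in> {b..b + h} \<Longrightarrow> p s t = q s t"
  shows "p = q"
proof (intro ext)
  fix s t
  have "(\<lambda>s. p s t') = (\<lambda>s. q s t')" if "t' \<in> {b..b + h}" for t'
    using assms that by (intro poly_fun_eqI[of m _ n _ "{a..a + h}"] Q2_line_fst) auto
  then have "p s = q s"
    using assms by (intro poly_fun_eqI[of m _ n _ "{b..b + h}"] Q2_line_snd) (auto dest: fun_cong)
  then show "p s t = q s t"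
    by simp
qed

lemma Q2_zero: "(\<lambda>s t. 0) \<in> Q2 n"
  by (rule Q2I[where d = "\<lambda>i j. 0"]) simp

lemma Q2_add_diff:
  assumes "p \<in> Q2 n" "q \<in> Q2 n"
  shows "(\<lambda>s t. p s t + q s t) \<in> Q2 n" "(\<lambda>s t. p s t - q s t) \<in> Q2 n"
proof -
  obtain d e where
    d: "\<And>s t. p s t = (\<Sum>i\<le>n. \<Sum>j\<le>n. d i j * s ^ i * t ^ j)" and
    e: "\<And>s t. q s t = (\<Sum>i\<le>n. \<Sum>j\<le>n. e i j * s ^ i * t ^ j)"
    using assms unfolding Q2_def by blast
  have "p s t + q s t = (\<Sum>i\<le>n. \<Sum>j\<le>n. (d i j + e i j) * s ^ i * t ^ j)" for s t
    by (simp add: d e sum.distrib distrib_right)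
  moreover have "p s t - q s t = (\<Sum>i\<le>n. \<Sum>j\<le>n. (d i j - e i j) * s ^ i * t ^ j)" for s t
    by (simp add: d e sum_subtractf left_diff_distrib)
  ultimately show "(\<lambda>s t. p s t + q s t) \<in> Q2 n" "(\<lambda>s t. p s t - q s t) \<in> Q2 n"
    by (auto intro: Q2I)
qed

lemma Q2_sum:
  assumes "finite S" "\<And>i. i \<in> S \<Longrightarrow> p i \<in> Q2 n"
  shows "(\<lambda>s t. \<Sum>i\<in>S. p i s t) \<in> Q2 n"
  using assms by (induction S rule: finite_induct) (auto simp: Q2_zero Q2_add_diff)

lemma Q2_product:
  assumes "c = 0 \<or> degree P \<le> n \<and> degree Q \<le> n"
  shows "(\<lambda>s t. c * poly P s * poly Q t) \<in> Q2 n"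
proof (cases "c = 0")
  case True
  then show ?thesis
    by (simp add: Q2_zero)
next
  case False
  then have "degree P \<le> n" "degree Q \<le> n"
    using assms by auto
  then show ?thesis
    by (intro Q2I[where d = "\<lambda>i j. c * coeff P i * coeff Q j"])
      (simp add: poly_eq_power_sum sum_product sum_distrib_left mult_ac)
qed

lemma QkI:
  assumes "\<And>x y z. v x y z = (\<Sum>i\<le>k. \<Sum>j\<le>k. \<Sum>l\<le>k. c i j l * x ^ i * y ^ j * z ^ l)"
  shows "v \<in> Qk k"
  unfolding Qk_def using assms by blast

lemma Qk_add_diff:
  assumes "v \<in> Qk k" "w \<in> Qk k"
  shows "(\<lambda>x y z. v x y z + w x y z) \<in> Qk k" "(\<lambda>x y z. v x y z - w x y z) \<in> Qk k"
proof -
  obtain c d where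
    c: "\<And>x y z. v x y z = (\<Sum>i\<le>k. \<Sum>j\<le>k. \<Sum>l\<le>k. c i j l * x ^ i * y ^ j * z ^ l)" and
    d: "\<And>x y z. w x y z = (\<Sum>i\<le>k. \<Sum>j\<le>k. \<Sum>l\<le>k. d i j l * x ^ i * y ^ j * z ^ l)"
    using assms unfolding Qk_def by blast
  show "(\<lambda>x y z. v x y z + w x y z) \<in> Qk k"
    by (rule QkI[where c = "\<lambda>i j l. c i j l + d i j l"]) (simp add: c d sum.distrib distrib_right)
  show "(\<lambda>x y z. v x y z - w x y z) \<in> Qk k"
    by (rule QkI[where c = "\<lambda>i j l. c i j l - d i j l"])
      (simp add: c d sum_subtractf left_diff_distrib)
qed

definition tensor :: "real poly \<Rightarrow> real poly \<Rightarrow> real poly \<Rightarrow> fn3" where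
  "tensor P Q R = (\<lambda>x y z. poly P x * poly Q y * poly R z)"

definition tensor_sum ::
    "'i set \<Rightarrow> ('i \<Rightarrow> real) \<Rightarrow> ('i \<Rightarrow> real poly) \<Rightarrow> ('i \<Rightarrow> real poly) \<Rightarrow> ('i \<Rightarrow> real poly) \<Rightarrow> fn3"
  where "tensor_sum S w P Q R = (\<lambda>x y z. \<Sum>n\<in>S. w n * tensor (P n) (Q n) (R n) x y z)"

lemma dX_tensor: "dX (tensor P Q R) = tensor (pderiv P) Q R"
  unfolding dX_def tensor_def by (intro ext DERIV_imp_deriv derivative_eq_intros) auto

lemma dY_tensor: "dY (tensor P Q R) = tensor P (pderiv Q) R"
  unfolding dY_def tensor_def by (intro ext DERIV_imp_deriv derivative_eq_intros) auto

lemma dZ_tensor: "dZ (tensor P Q R) = tensor P Q (pderiv R)"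
  unfolding dZ_def tensor_def by (intro ext DERIV_imp_deriv derivative_eq_intros) auto

lemma dX_tensor_sum: "dX (tensor_sum S w P Q R) = tensor_sum S w (\<lambda>n. pderiv (P n)) Q R"
  unfolding dX_def tensor_sum_def tensor_def by (intro ext DERIV_imp_deriv derivative_eq_intros) auto

lemma dY_tensor_sum: "dY (tensor_sum S w P Q R) = tensor_sum S w P (\<lambda>n. pderiv (Q n)) R"
  unfolding dY_def tensor_sum_def tensor_def by (intro ext DERIV_imp_deriv derivative_eq_intros) auto

lemma dZ_tensor_sum: "dZ (tensor_sum S w P Q R) = tensor_sum S w P Q (\<lambda>n. pderiv (R n))"
  unfolding dZ_def tensor_sum_def tensor_def by (intro ext DERIV_imp_deriv derivative_eq_intros) auto

lemma Qk_scaled_tensor: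
  assumes "degree P \<le> k" "degree Q \<le> k" "degree R \<le> k"
  shows "(\<lambda>x y z. w * tensor P Q R x y z) \<in> Qk k"
  by (rule QkI[where c = "\<lambda>i j l. w * coeff P i * coeff Q j * coeff R l"])
    (simp only: tensor_def poly_eq_power_sum[OF assms(1)] poly_eq_power_sum[OF assms(2)]
      poly_eq_power_sum[OF assms(3)] mult.assoc sum_distrib_right,
     simp only: sum_distrib_left, simp add: mult_ac)

lemma Qk_tensor_sum:
  assumes "finite S" "\<And>n. n \<in> S \<Longrightarrow> degree (P n) \<le> k \<and> degree (Q n) \<le> k \<and> degree (R n) \<le> k"
  shows "tensor_sum S w P Q R \<in> Qk k"
  using assms unfolding tensor_sum_def
proof (induction S rule: finite_induct)
  case empty
  then show ?case
    by (simp add: QkI[where c = "\<lambda>i j l. 0"])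
next
  case (insert n S)
  then show ?case
    by (simp add: Qk_add_diff(1) Qk_scaled_tensor)
qed

abbreviation monomial_sum :: "nat \<Rightarrow> (nat \<times> nat \<times> nat \<Rightarrow> real) \<Rightarrow> fn3" where
  "monomial_sum k w \<equiv> tensor_sum ({..k} \<times> {..k} \<times> {..k}) w
     (\<lambda>(i, j, l). monom 1 i) (\<lambda>(i, j, l). monom 1 j) (\<lambda>(i, j, l). monom 1 l)"

lemma Qk_iff_monomial_sum: "v \<in> Qk k \<longleftrightarrow> (\<exists>w. v = monomial_sum k w)"
proof
  assume "v \<in> Qk k"
  then obtain c where c: "\<And>x y z. v x y z = (\<Sum>i\<le>k. \<Sum>j\<le>k. \<Sum>l\<le>k. c i j l * x ^ i * y ^ j * z ^ l)"
    unfolding Qk_def by blast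
  have "v = monomial_sum k (\<lambda>(i, j, l). c i j l)"
    by (simp add: fun_eq_iff c tensor_sum_def tensor_def poly_monom sum.cartesian_product split_beta
        mult_ac)
  then show "\<exists>w. v = monomial_sum k w"
    by blast
next
  assume "\<exists>w. v = monomial_sum k w"
  then show "v \<in> Qk k"
    by (auto intro!: Qk_tensor_sum simp: degree_monom_eq)
qed

lemma tensor_sum_slice_x:
  assumes "finite S" "\<And>n. n \<in> S \<Longrightarrow> w n * poly (P n) x = 0 \<or> degree (Q n) \<le> m \<and> degree (R n) \<le> m"
  shows "(\<lambda>y z. tensor_sum S w P Q R x y z) \<in> Q2 m"
  unfolding tensor_sum_def
proof (rule Q2_sum[OF assms(1)])
  fix n assume "n \<in> S"
  then show "(\<lambda>y z. w n * tensor (P n) (Q n) (R n) x y z) \<in> Q2 m"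
    using Q2_product[of "w n * poly (P n) x" "Q n" m "R n"] assms(2) by (simp add: tensor_def mult_ac)
qed

lemma tensor_sum_slice_y:
  assumes "finite S" "\<And>n. n \<in> S \<Longrightarrow> w n * poly (Q n) y = 0 \<or> degree (P n) \<le> m \<and> degree (R n) \<le> m"
  shows "(\<lambda>x z. tensor_sum S w P Q R x y z) \<in> Q2 m"
  unfolding tensor_sum_def
proof (rule Q2_sum[OF assms(1)])
  fix n assume "n \<in> S"
  then show "(\<lambda>x z. w n * tensor (P n) (Q n) (R n) x y z) \<in> Q2 m"
    using Q2_product[of "w n * poly (Q n) y" "P n" m "R n"] assms(2) by (simp add: tensor_def mult_ac)
qed

lemma tensor_sum_slice_z:
  assumes "finite S" "\<And>n. n \<in> S \<Longrightarrow> w n * poly (R n) z = 0 \<or> degree (P n) \<le> m \<and> degree (Q n) \<le> m"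
  shows "(\<lambda>x y. tensor_sum S w P Q R x y z) \<in> Q2 m"
  unfolding tensor_sum_def
proof (rule Q2_sum[OF assms(1)])
  fix n assume "n \<in> S"
  then show "(\<lambda>x y. w n * tensor (P n) (Q n) (R n) x y z) \<in> Q2 m"
    using Q2_product[of "w n * poly (R n) z" "P n" m "Q n"] assms(2) by (simp add: tensor_def mult_ac)
qed

lemma Qk_slice_x: "v \<in> Qk k \<Longrightarrow> (\<lambda>y z. v x y z) \<in> Q2 k"
  unfolding Qk_iff_monomial_sum by (auto intro!: tensor_sum_slice_x simp: degree_monom_eq)

lemma Qk_slice_y: "v \<in> Qk k \<Longrightarrow> (\<lambda>x z. v x y z) \<in> Q2 k"
  unfolding Qk_iff_monomial_sum by (auto intro!: tensor_sum_slice_y simp: degree_monom_eq)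

lemma Qk_slice_z: "v \<in> Qk k \<Longrightarrow> (\<lambda>x y. v x y z) \<in> Q2 k"
  unfolding Qk_iff_monomial_sum by (auto intro!: tensor_sum_slice_z simp: degree_monom_eq)

lemma Qk_line_x: "v \<in> Qk k \<Longrightarrow> poly_fun k (\<lambda>t. v t y z)"
  using Q2_line_fst[OF Qk_slice_z] .

lemma Qk_line_y: "v \<in> Qk k \<Longrightarrow> poly_fun k (\<lambda>t. v x t z)"
  using Q2_line_snd[OF Qk_slice_z] .

lemma Qk_line_z: "v \<in> Qk k \<Longrightarrow> poly_fun k (\<lambda>t. v x y t)"
  using Q2_line_snd[OF Qk_slice_x] .

lemma Qk_partials:
  assumes "v \<in> Qk k"
  shows "dX v \<in> Qk k" "dY v \<in> Qk k" "dZ v \<in> Qk k"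
proof -
  obtain w where "v = monomial_sum k w"
    using assms unfolding Qk_iff_monomial_sum by blast
  then show "dX v \<in> Qk k" "dY v \<in> Qk k" "dZ v \<in> Qk k"
    by (auto simp: dX_tensor_sum dY_tensor_sum dZ_tensor_sum degree_pderiv degree_monom_eq
        intro!: Qk_tensor_sum)
qed

lemma Qk_partials_commute:
  assumes "v \<in> Qk k"
  shows "dY (dX v) = dX (dY v)" "dZ (dX v) = dX (dZ v)" "dZ (dY v) = dY (dZ v)"
proof -
  obtain w where "v = monomial_sum k w"
    using assms unfolding Qk_iff_monomial_sum by blast
  then show "dY (dX v) = dX (dY v)" "dZ (dX v) = dX (dZ v)" "dZ (dY v) = dY (dZ v)"
    by (simp_all add: dX_tensor_sum dY_tensor_sum dZ_tensor_sum)
qed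

lemma Qk_partials_diff:
  assumes "v \<in> Qk k" "w \<in> Qk k"
  shows "dX (\<lambda>x y z. v x y z - w x y z) = (\<lambda>x y z. dX v x y z - dX w x y z)"
    and "dY (\<lambda>x y z. v x y z - w x y z) = (\<lambda>x y z. dY v x y z - dY w x y z)"
    and "dZ (\<lambda>x y z. v x y z - w x y z) = (\<lambda>x y z. dZ v x y z - dZ w x y z)"
  unfolding dX_def dY_def dZ_def
  by (intro ext DERIV_imp_deriv DERIV_diff poly_fun_has_deriv[OF Qk_line_x[OF assms(1)]]
      poly_fun_has_deriv[OF Qk_line_x[OF assms(2)]] poly_fun_has_deriv[OF Qk_line_y[OF assms(1)]]
      poly_fun_has_deriv[OF Qk_line_y[OF assms(2)]] poly_fun_has_deriv[OF Qk_line_z[OF assms(1)]]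
      poly_fun_has_deriv[OF Qk_line_z[OF assms(2)]])+

section \<open>The space \<open>V\<^sub>T\<close> and its degrees of freedom\<close>

lemma VT_iff:
  assumes "0 < h"
  shows "v \<in> VT k a b c h \<longleftrightarrow> v \<in> Qk k \<and>
    (\<forall>x\<in>{a, a + h}. (\<lambda>y z. dX v x y z) \<in> Q2 (k - 1)) \<and>
    (\<forall>y\<in>{b, b + h}. (\<lambda>x z. dY v x y z) \<in> Q2 (k - 1)) \<and>
    (\<forall>z\<in>{c, c + h}. (\<lambda>x y. dZ v x y z) \<in> Q2 (k - 1))"
    (is "_ \<longleftrightarrow> _ \<and> ?X \<and> ?Y \<and> ?Z")
proof
  assume v: "v \<in> VT k a b c h"
  then have "v \<in> Qk k"
    unfolding VT_def by blast
  have global: "q \<in> Q2 (k - 1)"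
    if "q \<in> Q2 k" "\<exists>p\<in>Q2 (k - 1). \<forall>s\<in>{a'..a' + h}. \<forall>t\<in>{b'..b' + h}. q s t = p s t"
    for q a' b'
    using that assms Q2_eq_on_square[of q k _ "k - 1" h a' b'] by metis
  have ?X
  proof
    fix x assume "x \<in> {a, a + h}"
    with v show "(\<lambda>y z. dX v x y z) \<in> Q2 (k - 1)"
      unfolding VT_def by (intro global Qk_slice_x Qk_partials \<open>v \<in> Qk k\<close>) auto
  qed
  moreover have ?Y
  proof
    fix y assume "y \<in> {b, b + h}"
    with v show "(\<lambda>x z. dY v x y z) \<in> Q2 (k - 1)"
      unfolding VT_def by (intro global Qk_slice_y Qk_partials \<open>v \<in> Qk k\<close>) auto
  qed
  moreover have ?Z
  proof
    fix z assume "z \<in> {c, c + h}"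
    with v show "(\<lambda>x y. dZ v x y z) \<in> Q2 (k - 1)"
      unfolding VT_def by (intro global Qk_slice_z Qk_partials \<open>v \<in> Qk k\<close>) auto
  qed
  ultimately show "v \<in> Qk k \<and> ?X \<and> ?Y \<and> ?Z"
    using \<open>v \<in> Qk k\<close> by blast
next
  assume "v \<in> Qk k \<and> ?X \<and> ?Y \<and> ?Z"
  then show "v \<in> VT k a b c h"
    unfolding VT_def by fastforce
qed

lemma VT_diff:
  assumes "0 < h" "v \<in> VT k a b c h" "w \<in> VT k a b c h"
  shows "(\<lambda>x y z. v x y z - w x y z) \<in> VT k a b c h"
  using assms by (simp add: VT_iff Qk_add_diff Qk_partials_diff[where k = k] Q2_add_diff)

lemma ball_dofsI:
  assumes "\<And>x y z. P (\<lambda>v. v x y z)"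
    and "\<And>x y z. P (\<lambda>v. dX v x y z)" "\<And>x y z. P (\<lambda>v. dY v x y z)" "\<And>x y z. P (\<lambda>v. dZ v x y z)"
    and "\<And>x y z. P (\<lambda>v. dX (dY v) x y z)" "\<And>x y z. P (\<lambda>v. dX (dZ v) x y z)"
    and "\<And>x y z. P (\<lambda>v. dY (dZ v) x y z)" "\<And>x y z. P (\<lambda>v. dX (dY (dZ v)) x y z)"
  shows "\<forall>f\<in>set (dofs k a b c h). P f"
  unfolding dofs_def set_append ball_Un by (simp add: ball_UN ball_Un assms)

lemma ball_dofsD:
  assumes "\<forall>f\<in>set (dofs k a b c h). P f"
  shows "\<forall>x\<in>{a, a + h}. \<forall>y\<in>{b, b + h}. \<forall>z\<in>{c, c + h}.
       P (\<lambda>v. v x y z) \<and> P (\<lambda>v. dX v x y z) \<and> P (\<lambda>v. dY v x y z) \<and> P (\<lambda>v. dZ v x y z) \<and>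
       P (\<lambda>v. dX (dY v) x y z) \<and> P (\<lambda>v. dX (dZ v) x y z) \<and> P (\<lambda>v. dY (dZ v) x y z) \<and>
       P (\<lambda>v. dX (dY (dZ v)) x y z)"
    and "\<forall>y\<in>{b, b + h}. \<forall>z\<in>{c, c + h}. \<forall>t\<in>set (off h (k - 2)). P (\<lambda>v. v (a + t) y z)"
    and "\<forall>x\<in>{a, a + h}. \<forall>z\<in>{c, c + h}. \<forall>t\<in>set (off h (k - 2)). P (\<lambda>v. v x (b + t) z)"
    and "\<forall>x\<in>{a, a + h}. \<forall>y\<in>{b, b + h}. \<forall>t\<in>set (off h (k - 2)). P (\<lambda>v. v x y (c + t))"
    and "\<forall>y\<in>{b, b + h}. \<forall>z\<in>{c, c + h}. \<forall>t\<in>set (off h (k - 3)).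
       P (\<lambda>v. dY v (a + t) y z) \<and> P (\<lambda>v. dZ v (a + t) y z) \<and> P (\<lambda>v. dY (dZ v) (a + t) y z)"
    and "\<forall>x\<in>{a, a + h}. \<forall>z\<in>{c, c + h}. \<forall>t\<in>set (off h (k - 3)).
       P (\<lambda>v. dX v x (b + t) z) \<and> P (\<lambda>v. dZ v x (b + t) z) \<and> P (\<lambda>v. dX (dZ v) x (b + t) z)"
    and "\<forall>x\<in>{a, a + h}. \<forall>y\<in>{b, b + h}. \<forall>t\<in>set (off h (k - 3)).
       P (\<lambda>v. dX v x y (c + t)) \<and> P (\<lambda>v. dY v x y (c + t)) \<and> P (\<lambda>v. dX (dY v) x y (c + t))"
    and "\<forall>x\<in>{a, a + h}. \<forall>s\<in>set (off h (k - 2)). \<forall>t\<in>set (off h (k - 2)). P (\<lambda>v. v x (b + s) (c + t))"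
    and "\<forall>y\<in>{b, b + h}. \<forall>s\<in>set (off h (k - 2)). \<forall>t\<in>set (off h (k - 2)). P (\<lambda>v. v (a + s) y (c + t))"
    and "\<forall>z\<in>{c, c + h}. \<forall>s\<in>set (off h (k - 2)). \<forall>t\<in>set (off h (k - 2)). P (\<lambda>v. v (a + s) (b + t) z)"
    and "\<forall>x\<in>{a, a + h}. \<forall>s\<in>set (off h (k - 3)). \<forall>t\<in>set (off h (k - 3)). P (\<lambda>v. dX v x (b + s) (c + t))"
    and "\<forall>y\<in>{b, b + h}. \<forall>s\<in>set (off h (k - 3)). \<forall>t\<in>set (off h (k - 3)). P (\<lambda>v. dY v (a + s) y (c + t))"
    and "\<forall>z\<in>{c, c + h}. \<forall>s\<in>set (off h (k - 3)). \<forall>t\<in>set (off h (k - 3)). P (\<lambda>v. dZ v (a + s) (b + t) z)"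
    and "\<forall>r\<in>set (off h (k - 2)). \<forall>s\<in>set (off h (k - 2)). \<forall>t\<in>set (off h (k - 2)).
       P (\<lambda>v. v (a + r) (b + s) (c + t))"
  using assms unfolding dofs_def set_append ball_Un by (simp_all add: ball_UN ball_Un)

lemma dofs_diff:
  assumes "v \<in> Qk k" "w \<in> Qk k"
  shows "\<forall>f\<in>set (dofs k a b c h). f (\<lambda>x y z. v x y z - w x y z) = f v - f w"
  by (rule ball_dofsI) (simp_all add: assms Qk_partials[where k = k] Qk_partials_diff[where k = k])

lemma dofs_tensor_sum:
  "\<forall>f\<in>set (dofs k a b c h). f (tensor_sum S w P Q R) = (\<Sum>n\<in>S. w n * f (tensor (P n) (Q n) (R n)))"
  by (rule ball_dofsI)
    (simp_all add: dX_tensor_sum dY_tensor_sum dZ_tensor_sum dX_tensor dY_tensor dZ_tensor,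
     simp_all add: tensor_sum_def)

section \<open>Uniqueness\<close>

lemma deriv_line_x: "deriv (\<lambda>t. w t y z) x = dX w x y z"
  by (simp add: dX_def)

lemma deriv_line_y: "deriv (\<lambda>t. w x t z) y = dY w x y z"
  by (simp add: dY_def)

lemma deriv_line_z: "deriv (\<lambda>t. w x y t) z = dZ w x y z"
  by (simp add: dZ_def)

lemmas deriv_lines = deriv_line_x deriv_line_y deriv_line_z

lemma x_line_vanishes:
  assumes "0 < h" "poly_fun n (\<lambda>t. w t y z)"
    and "w a y z = 0" "dX w a y z = 0" "w (a + h) y z = 0" "dX w (a + h) y z = 0"
    and "\<And>t. t \<in> set (off h (n - 2)) \<Longrightarrow> w (a + t) y z = 0"
  shows "w x y z = 0"
  using hermite_grid_vanishes[OF assms(1,2)] assms(3-) unfolding dX_def by blast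

lemma y_line_vanishes:
  assumes "0 < h" "poly_fun n (\<lambda>t. w x t z)"
    and "w x b z = 0" "dY w x b z = 0" "w x (b + h) z = 0" "dY w x (b + h) z = 0"
    and "\<And>t. t \<in> set (off h (n - 2)) \<Longrightarrow> w x (b + t) z = 0"
  shows "w x y z = 0"
  using hermite_grid_vanishes[OF assms(1,2)] assms(3-) unfolding dY_def by blast

lemma z_line_vanishes:
  assumes "0 < h" "poly_fun n (\<lambda>t. w x y t)"
    and "w x y c = 0" "dZ w x y c = 0" "w x y (c + h) = 0" "dZ w x y (c + h) = 0"
    and "\<And>t. t \<in> set (off h (n - 2)) \<Longrightarrow> w x y (c + t) = 0"
  shows "w x y z = 0"
  using hermite_grid_vanishes[OF assms(1,2)] assms(3-) unfolding dZ_def by blast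

lemma square_grid_vanishes:
  fixes F :: "real \<Rightarrow> real \<Rightarrow> real"
  assumes h: "0 < h"
    and lines: "\<And>t. poly_fun n (\<lambda>s. F s t)" "\<And>s. poly_fun n (F s)"
    and edges_fst: "\<And>s0 t. s0 \<in> {a, a + h} \<Longrightarrow> F s0 t = 0 \<and> deriv (\<lambda>s. F s t) s0 = 0"
    and edges_snd: "\<And>s t0. t0 \<in> {b, b + h} \<Longrightarrow> F s t0 = 0 \<and> deriv (F s) t0 = 0"
    and grid: "\<And>s t. s \<in> set (off h (n - 2)) \<Longrightarrow> t \<in> set (off h (n - 2)) \<Longrightarrow> F (a + s) (b + t) = 0"
  shows "F s t = 0"
proof -
  have grid_lines: "F (a + s') t = 0" if "s' \<in> set (off h (n - 2))" for s' t
    by (rule hermite_grid_vanishes[OF h lines(2), where a = b]) (use edges_snd grid that in auto)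
  show ?thesis
    by (rule hermite_grid_vanishes[OF h lines(1), where a = a]) (use edges_fst grid_lines in auto)
qed

lemma cube_grid_vanishes:
  assumes h: "0 < h"
    and lines: "\<And>y z. poly_fun n (\<lambda>t. G t y z)" "\<And>x z. poly_fun n (\<lambda>t. G x t z)"
      "\<And>x y. poly_fun n (\<lambda>t. G x y t)"
    and faces: "\<And>x y z. x \<in> {a, a + h} \<Longrightarrow> G x y z = 0 \<and> dX G x y z = 0"
      "\<And>x y z. y \<in> {b, b + h} \<Longrightarrow> G x y z = 0 \<and> dY G x y z = 0"
      "\<And>x y z. z \<in> {c, c + h} \<Longrightarrow> G x y z = 0 \<and> dZ G x y z = 0"
    and grid: "\<And>r s t. r \<in> set (off h (n - 2)) \<Longrightarrow> s \<in> set (off h (n - 2)) \<Longrightarrow> t \<in> set (off h (n - 2)) \<Longrightarrow>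
      G (a + r) (b + s) (c + t) = 0"
  shows "G x y z = 0"
proof -
  have x_lines: "G x (b + s) (c + t) = 0"
    if "s \<in> set (off h (n - 2))" "t \<in> set (off h (n - 2))" for x s t
    by (rule x_line_vanishes[OF h lines(1), where a = a]) (use faces(1) grid that in auto)
  have y_lines: "G x y (c + t) = 0" if "t \<in> set (off h (n - 2))" for x y t
    by (rule y_line_vanishes[OF h lines(2), where b = b]) (use faces(2) x_lines that in auto)
  show ?thesis
    by (rule z_line_vanishes[OF h lines(3), where c = c]) (use faces(3) y_lines in auto)
qed

text \<open>Writing \<open>k = m + 4\<close> turns the grid sizes \<open>k - 2\<close>, \<open>k - 3\<close> and the truncated difference
  \<open>(k - 1) - 2\<close> uniformly into \<open>m + 2\<close> and \<open>m + 1\<close>.\<close>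
context
  fixes k m :: nat and a b c h :: real and v :: fn3
  assumes k: "k = m + 4" and h: "0 < h" and v: "v \<in> VT k a b c h"
    and dofs_v: "\<forall>f\<in>set (dofs k a b c h). f v = 0"
begin

lemma zero_dofs_Qk: "v \<in> Qk k"
  using v unfolding VT_iff[OF h] by auto

lemma zero_dofs_faces:
  shows "x \<in> {a, a + h} \<Longrightarrow> (\<lambda>y z. dX v x y z) \<in> Q2 (k - 1)"
    and "y \<in> {b, b + h} \<Longrightarrow> (\<lambda>x z. dY v x y z) \<in> Q2 (k - 1)"
    and "z \<in> {c, c + h} \<Longrightarrow> (\<lambda>x y. dZ v x y z) \<in> Q2 (k - 1)"
  using v unfolding VT_iff[OF h] by auto

lemmas zero_dofs_lines =
  Qk_line_x[OF zero_dofs_Qk] Qk_line_y[OF zero_dofs_Qk] Qk_line_z[OF zero_dofs_Qk]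

lemma zero_dofs_partials_commute:
  "dY (dX v) = dX (dY v)" "dZ (dX v) = dX (dZ v)" "dZ (dY v) = dY (dZ v)"
  "dY (dX (dZ v)) = dX (dY (dZ v))" "dZ (dX (dY v)) = dX (dY (dZ v))"
  using Qk_partials_commute[OF zero_dofs_Qk] Qk_partials_commute[OF Qk_partials(2)[OF zero_dofs_Qk]]
    Qk_partials_commute[OF Qk_partials(3)[OF zero_dofs_Qk]] by simp_all

lemmas zero_dofs = ball_dofsD[OF dofs_v, rule_format]

lemma zero_dofs_x_edges:
  assumes "y \<in> {b, b + h}" "z \<in> {c, c + h}"
  shows "v x y z = 0" "dY v x y z = 0" "dZ v x y z = 0" "dY (dZ v) x y z = 0"
proof -
  have "poly_fun (k - 1) (\<lambda>t. dY (dZ v) t y z)"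
    using Q2_deriv_line_snd[OF zero_dofs_faces(3)] assms by (simp add: deriv_line_y)
  note facts = this assms zero_dofs(1,2,5) zero_dofs_lines(1) Q2_line_fst[OF zero_dofs_faces(2)]
    Q2_line_fst[OF zero_dofs_faces(3)] k
  show "v x y z = 0"
    by (rule x_line_vanishes[OF h, where a = a and w = v and n = k]) (use facts in auto)
  show "dY v x y z = 0"
    by (rule x_line_vanishes[OF h, where a = a and w = "dY v" and n = "k - 1"]) (use facts in auto)
  show "dZ v x y z = 0"
    by (rule x_line_vanishes[OF h, where a = a and w = "dZ v" and n = "k - 1"]) (use facts in auto)
  show "dY (dZ v) x y z = 0"
    by (rule x_line_vanishes[OF h, where a = a and w = "dY (dZ v)" and n = "k - 1"])
      (use facts in auto)
qed

lemma zero_dofs_y_edges: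
  assumes "x \<in> {a, a + h}" "z \<in> {c, c + h}"
  shows "v x y z = 0" "dX v x y z = 0" "dZ v x y z = 0" "dX (dZ v) x y z = 0"
proof -
  have "poly_fun (k - 1) (\<lambda>t. dX (dZ v) x t z)"
    using Q2_deriv_line_snd[OF zero_dofs_faces(1)] assms
    by (simp add: deriv_line_z zero_dofs_partials_commute)
  note facts = this assms zero_dofs(1,3,6) zero_dofs_lines(2) Q2_line_fst[OF zero_dofs_faces(1)]
    Q2_line_snd[OF zero_dofs_faces(3)] zero_dofs_partials_commute k
  show "v x y z = 0"
    by (rule y_line_vanishes[OF h, where b = b and w = v and n = k]) (use facts in auto)
  show "dX v x y z = 0"
    by (rule y_line_vanishes[OF h, where b = b and w = "dX v" and n = "k - 1"]) (use facts in auto)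
  show "dZ v x y z = 0"
    by (rule y_line_vanishes[OF h, where b = b and w = "dZ v" and n = "k - 1"]) (use facts in auto)
  show "dX (dZ v) x y z = 0"
    by (rule y_line_vanishes[OF h, where b = b and w = "dX (dZ v)" and n = "k - 1"])
      (use facts in auto)
qed

lemma zero_dofs_z_edges:
  assumes "x \<in> {a, a + h}" "y \<in> {b, b + h}"
  shows "v x y z = 0" "dX v x y z = 0" "dY v x y z = 0" "dX (dY v) x y z = 0"
proof -
  have "poly_fun (k - 1) (\<lambda>t. dX (dY v) x y t)"
    using Q2_deriv_line_fst[OF zero_dofs_faces(2)] assms by (simp add: deriv_line_x)
  note facts = this assms zero_dofs(1,4,7) zero_dofs_lines(3) Q2_line_snd[OF zero_dofs_faces(1)]
    Q2_line_snd[OF zero_dofs_faces(2)] zero_dofs_partials_commute k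
  show "v x y z = 0"
    by (rule z_line_vanishes[OF h, where c = c and w = v and n = k]) (use facts in auto)
  show "dX v x y z = 0"
    by (rule z_line_vanishes[OF h, where c = c and w = "dX v" and n = "k - 1"]) (use facts in auto)
  show "dY v x y z = 0"
    by (rule z_line_vanishes[OF h, where c = c and w = "dY v" and n = "k - 1"]) (use facts in auto)
  show "dX (dY v) x y z = 0"
    by (rule z_line_vanishes[OF h, where c = c and w = "dX (dY v)" and n = "k - 1"])
      (use facts in auto)
qed

lemma zero_dofs_x_faces:
  assumes "x \<in> {a, a + h}"
  shows "v x y z = 0" "dX v x y z = 0"
proof -
  note edges = zero_dofs_y_edges[OF assms] zero_dofs_z_edges[OF assms]
  show "v x y z = 0"
    by (rule square_grid_vanishes[OF h, where F = "\<lambda>y z. v x y z" and n = k and a = b and b = c])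
      (use assms edges zero_dofs(8) zero_dofs_lines(2) zero_dofs_lines(3) k in
        \<open>auto simp: deriv_lines zero_dofs_partials_commute\<close>)
  show "dX v x y z = 0"
    by (rule square_grid_vanishes[OF h,
          where F = "\<lambda>y z. dX v x y z" and n = "k - 1" and a = b and b = c])
      (use assms edges zero_dofs(11) Q2_line_fst[OF zero_dofs_faces(1)]
        Q2_line_snd[OF zero_dofs_faces(1)] k in
        \<open>auto simp: deriv_lines zero_dofs_partials_commute\<close>)
qed

lemma zero_dofs_y_faces:
  assumes "y \<in> {b, b + h}"
  shows "v x y z = 0" "dY v x y z = 0"
proof -
  note edges = zero_dofs_x_edges[OF assms] zero_dofs_z_edges[OF _ assms]
  show "v x y z = 0"
    by (rule square_grid_vanishes[OF h, where F = "\<lambda>x z. v x y z" and n = k and a = a and b = c])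
      (use assms edges zero_dofs(9) zero_dofs_lines(1) zero_dofs_lines(3) k in
        \<open>auto simp: deriv_lines zero_dofs_partials_commute\<close>)
  show "dY v x y z = 0"
    by (rule square_grid_vanishes[OF h,
          where F = "\<lambda>x z. dY v x y z" and n = "k - 1" and a = a and b = c])
      (use assms edges zero_dofs(12) Q2_line_fst[OF zero_dofs_faces(2)]
        Q2_line_snd[OF zero_dofs_faces(2)] k in
        \<open>auto simp: deriv_lines zero_dofs_partials_commute\<close>)
qed

lemma zero_dofs_z_faces:
  assumes "z \<in> {c, c + h}"
  shows "v x y z = 0" "dZ v x y z = 0"
proof -
  note edges = zero_dofs_x_edges[OF _ assms] zero_dofs_y_edges[OF _ assms]
  show "v x y z = 0"
    by (rule square_grid_vanishes[OF h, where F = "\<lambda>x y. v x y z" and n = k and a = a and b = b])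
      (use assms edges zero_dofs(10) zero_dofs_lines(1) zero_dofs_lines(2) k in
        \<open>auto simp: deriv_lines zero_dofs_partials_commute\<close>)
  show "dZ v x y z = 0"
    by (rule square_grid_vanishes[OF h,
          where F = "\<lambda>x y. dZ v x y z" and n = "k - 1" and a = a and b = b])
      (use assms edges zero_dofs(13) Q2_line_fst[OF zero_dofs_faces(3)]
        Q2_line_snd[OF zero_dofs_faces(3)] k in
        \<open>auto simp: deriv_lines zero_dofs_partials_commute\<close>)
qed

lemma VT_vanishes_if_dofs_vanish: "v x y z = 0"
  by (rule cube_grid_vanishes[OF h zero_dofs_lines(1) zero_dofs_lines(2) zero_dofs_lines(3),
        where a = a and b = b and c = c])
    (simp_all add: zero_dofs_x_faces zero_dofs_y_faces zero_dofs_z_faces zero_dofs(14) k)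

end

lemma VT_eq_if_dofs_eq:
  assumes k: "4 \<le> k" and h: "0 < h" and vw: "v \<in> VT k a b c h" "w \<in> VT k a b c h"
    and dofs_eq: "\<forall>f\<in>set (dofs k a b c h). f v = f w"
  shows "v = w"
proof -
  obtain m where "k = m + 4"
    using k le_Suc_ex by (metis add.commute)
  moreover have "(\<lambda>x y z. v x y z - w x y z) \<in> VT k a b c h"
    using VT_diff[OF h vw] .
  moreover have "v \<in> Qk k" "w \<in> Qk k"
    using vw h by (simp_all add: VT_iff)
  then have "\<forall>f\<in>set (dofs k a b c h). f (\<lambda>x y z. v x y z - w x y z) = 0"
    using dofs_diff[of v k w a b c h] dofs_eq by auto
  ultimately have "v x y z - w x y z = 0" for x y z
    using VT_vanishes_if_dofs_vanish[OF _ h] by blast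
  then show ?thesis
    by (intro ext) simp
qed

section \<open>Existence\<close>

text \<open>A basis of the polynomials of degree at most \<open>k\<close> adapted to the end slopes on \<open>[0, h]\<close>:
  the slope at \<open>0\<close> vanishes except for \<open>i = 1\<close>, the slope at \<open>h\<close> vanishes except for
  \<open>i = k - 1\<close>, and the degree is below \<open>k\<close> except for \<open>i = k\<close>.\<close>
definition adapted_basis :: "nat \<Rightarrow> real \<Rightarrow> nat \<Rightarrow> real poly" where
  "adapted_basis k h i = (if i = k - 1 then monom 1 (k - 1)
     else monom 1 i -
       Polynomial.smult (of_nat i * h ^ i / (of_nat (k - 1) * h ^ (k - 1))) (monom 1 (k - 1)))"

lemma degree_adapted_basis: "degree (adapted_basis k h i) \<le> max i (k - 1)"
proof -
  have "degree (monom 1 i - Polynomial.smult r (monom 1 (k - 1))) \<le> max i (k - 1)" for r :: real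
    by (intro degree_diff_le order.trans[OF degree_smult_le]) (auto simp: degree_monom_eq)
  then show ?thesis
    unfolding adapted_basis_def by (simp add: degree_monom_eq)
qed

lemma coeff_adapted_basis:
  "coeff (adapted_basis k h i) j = (if j = i then 1 else 0) -
     (if i = k - 1 then 0 else of_nat i * h ^ i / (of_nat (k - 1) * h ^ (k - 1))) *
     (if j = k - 1 then 1 else 0)"
  unfolding adapted_basis_def by (simp add: coeff_monom)

lemma adapted_basis_slope_0:
  assumes "3 \<le> k" "i \<noteq> 1"
  shows "poly (pderiv (adapted_basis k h i)) 0 = 0"
  using assms unfolding adapted_basis_def
  by (cases i) (auto simp: pderiv_monom pderiv_diff pderiv_smult poly_monom power_0_left)

lemma adapted_basis_slope_h:
  assumes "2 \<le> k" "i \<noteq> k - 1" "h \<noteq> 0"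
  shows "poly (pderiv (adapted_basis k h i)) h = 0"
proof (cases i)
  case (Suc j)
  obtain n where k: "k = Suc (Suc n)"
    using assms(1) by (metis add_2_eq_Suc le_Suc_ex)
  have "poly (pderiv (adapted_basis k h i)) h =
      of_nat i * h ^ j - of_nat i * h ^ i / (of_nat (Suc n) * h ^ Suc n) * (of_nat (Suc n) * h ^ n)"
    using assms Suc unfolding adapted_basis_def k
    by (simp add: pderiv_monom pderiv_diff pderiv_smult poly_monom)
  also have "of_nat i * h ^ i / (of_nat (Suc n) * h ^ Suc n) * (of_nat (Suc n) * h ^ n) =
      (of_nat i * h ^ j) * (of_nat (Suc n) * h ^ Suc n) / (of_nat (Suc n) * h ^ Suc n)"
    by (simp add: Suc mult_ac)
  finally show ?thesis
    using assms(3) by simp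
qed (simp add: adapted_basis_def pderiv_monom pderiv_diff pderiv_smult)

lemma adapted_basis_independent:
  assumes "(\<Sum>i\<le>k. Polynomial.smult (w i) (adapted_basis k h i)) = 0" "j \<le> k"
  shows "w j = 0"
proof -
  have coeff: "(\<Sum>i\<le>k. w i * coeff (adapted_basis k h i) j) = 0" for j
    using arg_cong[OF assms(1), of "\<lambda>p. coeff p j"] by (simp add: coeff_sum)
  have off_top: "w j = 0" if "j \<le> k" "j \<noteq> k - 1" for j
  proof -
    have "(\<Sum>i\<le>k. w i * coeff (adapted_basis k h i) j) = (\<Sum>i\<le>k. if i = j then w i else 0)"
      using that by (intro sum.cong) (auto simp: coeff_adapted_basis)
    then show ?thesis
      using coeff[of j] that by simp
  qed
  have "(\<Sum>i\<le>k. w i * coeff (adapted_basis k h i) (k - 1)) = (\<Sum>i\<le>k. if i = k - 1 then w i else 0)"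
    using off_top by (intro sum.cong) (auto simp: coeff_adapted_basis)
  then have "w (k - 1) = 0"
    using coeff[of "k - 1"] by simp
  then show ?thesis
    using off_top assms(2) by blast
qed

definition adapted_basis_at :: "nat \<Rightarrow> real \<Rightarrow> real \<Rightarrow> nat \<Rightarrow> real poly" where
  "adapted_basis_at k a h i = pcompose (adapted_basis k h i) [:-a, 1:]"

lemma degree_adapted_basis_at: "degree (adapted_basis_at k a h i) \<le> max i (k - 1)"
  using degree_adapted_basis by (simp add: adapted_basis_at_def degree_pcompose)

lemma slope_adapted_basis_at:
  "poly (pderiv (adapted_basis_at k a h i)) x = poly (pderiv (adapted_basis k h i)) (x - a)"
  by (simp add: adapted_basis_at_def pderiv_pcompose poly_pcompose pderiv_pCons)

lemma adapted_basis_at_slopes_vanish: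
  assumes "3 \<le> k" "0 < h" "i \<notin> {1, k - 1}" "x \<in> {a, a + h}"
  shows "poly (pderiv (adapted_basis_at k a h i)) x = 0"
  using assms adapted_basis_slope_0[of k i h] adapted_basis_slope_h[of k i h]
  by (auto simp: slope_adapted_basis_at)

definition independent_upto :: "nat \<Rightarrow> (nat \<Rightarrow> real poly) \<Rightarrow> bool" where
  "independent_upto n P \<longleftrightarrow> (\<forall>w. (\<forall>x. (\<Sum>i\<le>n. w i * poly (P i) x) = 0) \<longrightarrow> (\<forall>i\<le>n. w i = 0))"

lemma independent_uptoD:
  "independent_upto n P \<Longrightarrow> (\<And>x. (\<Sum>i\<le>n. w i * poly (P i) x) = 0) \<Longrightarrow> i \<le> n \<Longrightarrow> w i = 0"
  unfolding independent_upto_def by blast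

lemma independent_upto_adapted_basis_at: "independent_upto k (adapted_basis_at k a h)"
  unfolding independent_upto_def
proof (intro allI impI)
  fix w :: "nat \<Rightarrow> real" and i
  assume "\<forall>x. (\<Sum>i\<le>k. w i * poly (adapted_basis_at k a h i) x) = 0" "i \<le> k"
  then have "poly (\<Sum>i\<le>k. Polynomial.smult (w i) (adapted_basis_at k a h i)) x = 0" for x
    by (simp add: poly_sum)
  then have "pcompose (\<Sum>i\<le>k. Polynomial.smult (w i) (adapted_basis k h i)) [:-a, 1:] = 0"
    unfolding poly_all_0_iff_0[symmetric]
    by (simp add: adapted_basis_at_def pcompose_sum pcompose_smult)
  then have "(\<Sum>i\<le>k. Polynomial.smult (w i) (adapted_basis k h i)) = 0"
    by (rule pcompose_eq_0) simp
  then show "w i = 0"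
    using \<open>i \<le> k\<close> by (rule adapted_basis_independent)
qed

lemma tensor_sum_independent:
  assumes A: "A \<subseteq> {..n} \<times> {..n} \<times> {..n}"
    and indep: "independent_upto n P" "independent_upto n Q" "independent_upto n R"
    and zero: "\<And>x y z. tensor_sum A u (\<lambda>(i, j, l). P i) (\<lambda>(i, j, l). Q j) (\<lambda>(i, j, l). R l) x y z = 0"
    and "(i, j, l) \<in> A"
  shows "u (i, j, l) = 0"
proof -
  define d where "d i j l = (if (i, j, l) \<in> A then u (i, j, l) else 0)" for i j l
  have cube: "(\<Sum>i\<le>n. \<Sum>j\<le>n. \<Sum>l\<le>n. d i j l * (poly (P i) x * poly (Q j) y * poly (R l) z)) = 0"
    for x y z
  proof -
    have "(\<Sum>i\<le>n. \<Sum>j\<le>n. \<Sum>l\<le>n. d i j l * (poly (P i) x * poly (Q j) y * poly (R l) z)) =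
        tensor_sum A u (\<lambda>(i, j, l). P i) (\<lambda>(i, j, l). Q j) (\<lambda>(i, j, l). R l) x y z"
      unfolding tensor_sum_def tensor_def sum.cartesian_product
      by (rule sum.mono_neutral_cong_right) (use A in \<open>auto simp: d_def\<close>)
    then show ?thesis
      using zero by simp
  qed
  have square: "(\<Sum>j\<le>n. \<Sum>l\<le>n. d i j l * (poly (Q j) y * poly (R l) z)) = 0" if "i \<le> n" for i y z
    by (rule independent_uptoD[OF indep(1) _ that,
          where w = "\<lambda>i. \<Sum>j\<le>n. \<Sum>l\<le>n. d i j l * (poly (Q j) y * poly (R l) z)"])
      (use cube in \<open>simp add: sum_distrib_left sum_distrib_right mult_ac\<close>)
  have line: "(\<Sum>l\<le>n. d i j l * poly (R l) z) = 0" if "i \<le> n" "j \<le> n" for i j z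
    by (rule independent_uptoD[OF indep(2) _ that(2), where w = "\<lambda>j. \<Sum>l\<le>n. d i j l * poly (R l) z"])
      (use square[OF that(1)] in \<open>simp add: sum_distrib_left sum_distrib_right mult_ac\<close>)
  have "d i j l = 0" if "i \<le> n" "j \<le> n" "l \<le> n"
    by (rule independent_uptoD[OF indep(3) _ that(3), where w = "d i j"])
      (use line[OF that(1,2)] in \<open>simp add: mult.commute\<close>)
  then show ?thesis
    using A \<open>(i, j, l) \<in> A\<close> by (auto simp: d_def)
qed

definition adapted_indices :: "nat \<Rightarrow> (nat \<times> nat \<times> nat) set" where
  "adapted_indices k = {..<k} \<times> {..<k} \<times> {..<k} \<union>
     ({..k} - {1, k - 1}) \<times> ({..k} - {1, k - 1}) \<times> ({..k} - {1, k - 1})"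

abbreviation adapted_sum :: "nat \<Rightarrow> real \<Rightarrow> real \<Rightarrow> real \<Rightarrow> real \<Rightarrow> (nat \<times> nat \<times> nat \<Rightarrow> real) \<Rightarrow> fn3"
  where "adapted_sum k a b c h u \<equiv> tensor_sum (adapted_indices k) u
     (\<lambda>(i, j, l). adapted_basis_at k a h i)
     (\<lambda>(i, j, l). adapted_basis_at k b h j) (\<lambda>(i, j, l). adapted_basis_at k c h l)"

lemma adapted_indices_subset: "adapted_indices k \<subseteq> {..k} \<times> {..k} \<times> {..k}"
  unfolding adapted_indices_def by auto

text \<open>Either all three factors have degree below \<open>k\<close>, or all their end slopes vanish; in both
  cases the normal derivative on every face lies in \<open>Q\<^sub>k\<^sub>-\<^sub>1\<close>.\<close>
lemma adapted_sum_in_VT: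
  assumes "3 \<le> k" "0 < h"
  shows "adapted_sum k a b c h u \<in> VT k a b c h"
proof -
  have degree: "degree (adapted_basis_at k a' h i) \<le> k" if "i \<le> k" for i a'
    using that degree_adapted_basis_at[of k a' h i] by auto
  have degree_less: "degree (adapted_basis_at k a' h i) \<le> k - Suc 0" if "i < k" for i a'
    using that degree_adapted_basis_at[of k a' h i] by auto
  have fin: "finite (adapted_indices k)"
    unfolding adapted_indices_def by auto
  note faces = adapted_indices_def degree_less adapted_basis_at_slopes_vanish[OF assms]
  show ?thesis
    unfolding VT_iff[OF assms(2)] dX_tensor_sum dY_tensor_sum dZ_tensor_sum
    using fin adapted_indices_subset
    by (intro conjI ballI Qk_tensor_sum tensor_sum_slice_x tensor_sum_slice_y tensor_sum_slice_z)
      (auto intro!: degree simp: faces)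
qed

lemma length_concat_map: "length (concat (map f xs)) = (\<Sum>x\<leftarrow>xs. length (f x))"
  by (induction xs) auto

lemma length_dofs:
  "length (dofs k a b c h) =
     64 + 12 * (k - 3) + 36 * (k - 4) + 6 * (k - 3)\<^sup>2 + 6 * (k - 4)\<^sup>2 + (k - 3) ^ 3"
  by (simp add: dofs_def off_def length_concat_map sum_list_triv power2_eq_square power3_eq_cube
      del: length_concat)

lemma card_adapted_indices:
  assumes "4 \<le> k"
  shows "card (adapted_indices k) = length (dofs k a b c h)"
proof -
  obtain m where k: "k = m + 4"
    using assms le_Suc_ex by (metis add.commute)
  let ?E = "{..k} - {1, k - 1}" and ?F = "{..<k} - {1, k - 1}"
  have "card ?E = m + 3" "card ?F = m + 2"
    using k by (simp_all add: card_Diff_subset)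
  moreover have "({..<k} \<times> {..<k} \<times> {..<k}) \<inter> (?E \<times> ?E \<times> ?E) = ?F \<times> ?F \<times> ?F"
    by auto
  moreover have "card ({..<k} \<times> {..<k} \<times> {..<k}) + card (?E \<times> ?E \<times> ?E) =
      card (adapted_indices k) + card (({..<k} \<times> {..<k} \<times> {..<k}) \<inter> (?E \<times> ?E \<times> ?E))"
    unfolding adapted_indices_def by (rule card_Un_Int) auto
  ultimately show ?thesis
    using k
    by (simp add: length_dofs card_cartesian_product power2_eq_square power3_eq_cube algebra_simps)
qed

lemma square_system_solvable:
  fixes L :: "nat \<Rightarrow> 'j \<Rightarrow> real"
  assumes J: "finite J" "card J = N"
    and inj: "\<And>u. \<forall>i<N. (\<Sum>j\<in>J. L i j * u j) = 0 \<Longrightarrow> \<forall>j\<in>J. u j = 0"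
  shows "\<exists>u. \<forall>i<N. (\<Sum>j\<in>J. L i j * u j) = g i"
proof -
  obtain e where e: "bij_betw e {..<N} J"
    using ex_bij_betw_nat_finite[OF J(1)] J(2) by (auto simp: atLeast0LessThan)
  define e' where "e' = the_inv_into {..<N} e"
  define M where "M = mat N N (\<lambda>(i, n). L i (e n))"
  have M: "M \<in> carrier_mat N N"
    by (simp add: M_def)
  have Mv: "(M *\<^sub>v x) $ i = (\<Sum>j\<in>J. L i j * x $ e' j)" if "x \<in> carrier_vec N" "i < N" for x i
  proof -
    have "(M *\<^sub>v x) $ i = (\<Sum>n<N. L i (e n) * x $ n)"
      using that by (simp add: M_def scalar_prod_def lessThan_atLeast0 mult.commute)
    also have "\<dots> = (\<Sum>n<N. L i (e n) * x $ e' (e n))"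
      using e unfolding e'_def by (intro sum.cong) (auto simp: the_inv_into_f_f bij_betw_def)
    also have "\<dots> = (\<Sum>j\<in>J. L i j * x $ e' j)"
      by (rule sum.reindex_bij_betw[OF e])
    finally show ?thesis .
  qed
  have "det M \<noteq> 0"
  proof
    assume "det M = 0"
    then obtain x where x: "x \<in> carrier_vec N" "x \<noteq> 0\<^sub>v N" "M *\<^sub>v x = 0\<^sub>v N"
      using det_0_iff_vec_prod_zero_field[OF M] by auto
    then have "\<forall>j\<in>J. x $ e' j = 0"
      using Mv[OF x(1)] by (intro inj[of "\<lambda>j. x $ e' j"]) (metis index_zero_vec(1))
    then have "x $ n = 0" if "n < N" for n
      using e that unfolding e'_def
      by (metis bij_betw_apply bij_betw_imp_inj_on lessThan_iff the_inv_into_f_f)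
    with x show False
      by (metis eq_vecI carrier_vecD index_zero_vec)
  qed
  then obtain M' where M': "M' \<in> carrier_mat N N" "M * M' = 1\<^sub>m N"
    using det_non_zero_imp_unit[OF M, of "()"] unfolding Units_def ring_mat_def by auto
  define x where "x = M' *\<^sub>v vec N g"
  have "x \<in> carrier_vec N" "M *\<^sub>v x = vec N g"
    unfolding x_def using M M' by (simp_all add: assoc_mult_mat_vec[symmetric])
  then show ?thesis
    using Mv by (intro exI[of _ "\<lambda>j. x $ e' j"]) (metis index_vec)
qed

lemma adapted_sum_dofs_surjective:
  assumes k: "4 \<le> k" and h: "0 < h"
  shows "\<exists>u. \<forall>i<length (dofs k a b c h). (dofs k a b c h ! i) (adapted_sum k a b c h u) = g i"
proof -
  define N where "N = length (dofs k a b c h)"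
  define L where "L i = (\<lambda>(i', j, l). (dofs k a b c h ! i)
    (tensor (adapted_basis_at k a h i') (adapted_basis_at k b h j) (adapted_basis_at k c h l)))" for i
  have dofs_sum:
    "(dofs k a b c h ! i) (adapted_sum k a b c h u) = (\<Sum>n\<in>adapted_indices k. L i n * u n)"
    if "i < N" for i u
  proof -
    have "(dofs k a b c h ! i) (adapted_sum k a b c h u) = (\<Sum>n\<in>adapted_indices k. u n *
        (dofs k a b c h ! i) (tensor ((\<lambda>(i, j, l). adapted_basis_at k a h i) n)
          ((\<lambda>(i, j, l). adapted_basis_at k b h j) n) ((\<lambda>(i, j, l). adapted_basis_at k c h l) n)))"
      by (rule dofs_tensor_sum[rule_format, OF nth_mem]) (use that in \<open>simp add: N_def\<close>)
    then show ?thesis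
      by (simp add: L_def split_beta mult.commute)
  qed
  obtain m where "k = m + 4"
    using k le_Suc_ex by (metis add.commute)
  have "\<exists>u. \<forall>i<N. (\<Sum>n\<in>adapted_indices k. L i n * u n) = g i"
  proof (rule square_system_solvable)
    show "finite (adapted_indices k)"
      unfolding adapted_indices_def by auto
    show "card (adapted_indices k) = N"
      unfolding N_def by (rule card_adapted_indices[OF k])
  next
    fix u assume "\<forall>i<N. (\<Sum>n\<in>adapted_indices k. L i n * u n) = 0"
    then have "\<forall>f\<in>set (dofs k a b c h). f (adapted_sum k a b c h u) = 0"
      using dofs_sum by (auto simp: in_set_conv_nth N_def)
    then have "adapted_sum k a b c h u x y z = 0" for x y z
      using VT_vanishes_if_dofs_vanish[OF \<open>k = m + 4\<close> h adapted_sum_in_VT] k h by simp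
    then show "\<forall>n\<in>adapted_indices k. u n = 0"
      using tensor_sum_independent[OF adapted_indices_subset independent_upto_adapted_basis_at
          independent_upto_adapted_basis_at independent_upto_adapted_basis_at]
      by (metis prod_cases3)
  qed
  then show ?thesis
    using dofs_sum unfolding N_def by auto
qed

theorem lemma3p1:
  fixes k :: nat and a b c h :: real
  assumes "k \<ge> 4" and "h > 0"
  shows "\<forall>g :: nat \<Rightarrow> real. \<exists>!v. v \<in> VT k a b c h \<and>
           (\<forall>i < length (dofs k a b c h). (dofs k a b c h ! i) v = g i)"
proof
  fix g :: "nat \<Rightarrow> real"
  obtain u where u: "\<forall>i<length (dofs k a b c h). (dofs k a b c h ! i) (adapted_sum k a b c h u) = g i"
    using adapted_sum_dofs_surjective[OF assms] by blast
  show "\<exists>!v. v \<in> VT k a b c h \<and> (\<forall>i<length (dofs k a b c h). (dofs k a b c h ! i) v = g i)"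
  proof (rule ex1I)
    show "adapted_sum k a b c h u \<in> VT k a b c h \<and>
        (\<forall>i<length (dofs k a b c h). (dofs k a b c h ! i) (adapted_sum k a b c h u) = g i)"
      using adapted_sum_in_VT assms u by simp
  next
    fix v assume v: "v \<in> VT k a b c h \<and> (\<forall>i<length (dofs k a b c h). (dofs k a b c h ! i) v = g i)"
    show "v = adapted_sum k a b c h u"
      by (rule VT_eq_if_dofs_eq[OF assms])
        (use v u adapted_sum_in_VT assms in \<open>auto simp: in_set_conv_nth\<close>)
  qed
qed

end
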